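(* Let $m\ge1$, $\gamma\in[0,1]$, $F\in C^{m,\gamma}(\mathbb{R}^n)$ and $K\subset\mathbb{R}^n$ compact with $D^jF(x)=0$ for all $x\in K$ and $1\le|j|\le m$; if $\gamma>0$ assume also $\lim_{\varepsilon\to0^+}|\nabla^mF|_{C^{0,\gamma}(K_\varepsilon)}=0$. For $\varepsilon>0$ let $\eta_\varepsilon$ be a compression map of level $\varepsilon$, and define the jet $\vec f_\varepsilon=\{f^{(j)}_\varepsilon\}_{|j|\le m}$ on $K$ by $f^{(0)}_\varepsilon=\eta_\varepsilon\circ F|_K$ and $f^{(j)}_\varepsilon=0$ for $1\le|j|\le m$. Then there is a function $\delta:\mathbb{R}_+\to\mathbb{R}_+$ with $\delta(\varepsilon)\to0$ as $\varepsilon\to0^+$ such that $\|\vec f_\varepsilon\|_{C^{m,\gamma}_{\mathrm{jet}}(K)}\le\delta(\varepsilon)$ for every $\varepsilon>0$ and every compression map $\eta_\varepsilon$ of level $\varepsilon$.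
   Context: Compression map of level $\varepsilon$: given finitely many pairwise disjoint open intervals $I_1,\dots,I_N\subset\mathbb{R}$ with $\sum|I_i|<\varepsilon$, set $\eta_\varepsilon(t)=\int_0^t\mathbf 1_{\bigcup_iI_i}(s)\,ds$ (so $\eta_\varepsilon$ is 1-Lipschitz, $\|\eta_\varepsilon\|_{C^0}\le\varepsilon$, and $\eta_\varepsilon(t)=t-c_i$ on $I_i$ for constants $c_i$). A jet of order $m$ on $K$ is a family $\vec f=\{f^{(j)}\}_{|j|\le m}$ of functions $K\to\mathbb{R}$ indexed by multi-indices. Set $R_j\vec f(x,y)=f^{(j)}(x)-\sum_{|j+l|\le m}\frac1{l!}f^{(j+l)}(y)(x-y)^l$. For $\gamma\in(0,1]$, $\|\vec f\|_{C^{m,\gamma}_{\mathrm{jet}}(K)}=\sup_{|j|\le m,\,x\ne y\in K}\max\{|f^{(j)}(x)|,\ |R_j\vec f(x,y)|/|x-y|^{m+\gamma-|j|}\}$. For $\gamma=0$, $C^{m,0}_{\mathrm{jet}}(K)$ consists of jets with bounded components and $|R_j\vec f(x,y)|/|x-y|^{m-|j|}\to0$ uniformly as $|x-y|\to0$, with the same formula for the norm (with $\gamma=0$). $K_\varepsilon$ is the open $\varepsilon$-neighbourhood of $K$ and $|f|_{C^{0,\gamma}(E)}=\sup_{x\neq y\in E}|f(x)-f(y)|/|x-y|^\gamma$. *)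

theory Defs
  imports "HOL-Analysis.Analysis"
begin

type_synonym 'n mindex = "'n \<Rightarrow> nat"

definition mabs :: "('n::finite) mindex \<Rightarrow> nat" where
  "mabs j = (\<Sum>i\<in>UNIV. j i)"

definition mfact :: "('n::finite) mindex \<Rightarrow> real" where
  "mfact l = (\<Prod>i\<in>UNIV. fact (l i))"

definition mpow :: "real^('n::finite) \<Rightarrow> 'n mindex \<Rightarrow> real" where
  "mpow v l = (\<Prod>i\<in>UNIV. (v $ i) ^ (l i))"

definition partial_deriv :: "'n::finite \<Rightarrow> (real^'n \<Rightarrow> real) \<Rightarrow> real^'n \<Rightarrow> real" where
  "partial_deriv i f x = deriv (\<lambda>t. f (x + t *\<^sub>R axis i 1)) 0"

fun iterD :: "('n::finite) list \<Rightarrow> (real^'n \<Rightarrow> real) \<Rightarrow> real^'n \<Rightarrow> real" where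
  "iterD [] f = f"
| "iterD (i # is) f = partial_deriv i (iterD is f)"

text \<open>D^j F: differentiate j(i) times in direction i (order irrelevant for C^m functions).\<close>

definition mderiv :: "('n::finite) mindex \<Rightarrow> (real^'n \<Rightarrow> real) \<Rightarrow> real^'n \<Rightarrow> real" where
  "mderiv j F = iterD (SOME ds. \<forall>i. count (mset ds) i = j i) F"

definition Cm :: "nat \<Rightarrow> (real^('n::finite) \<Rightarrow> real) \<Rightarrow> bool" where
  "Cm m F \<longleftrightarrow>
     (\<forall>ds. length ds \<le> m \<longrightarrow> continuous_on UNIV (iterD ds F)) \<and>
     (\<forall>ds i x. length ds < m \<longrightarrow>
        (\<lambda>t. iterD ds F (x + t *\<^sub>R axis i 1)) differentiable (at 0))"

definition Cmg :: "nat \<Rightarrow> real \<Rightarrow> (real^('n::finite) \<Rightarrow> real) \<Rightarrow> bool" where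
  "Cmg m \<gamma> F \<longleftrightarrow> Cm m F \<and>
     (\<forall>j. mabs j \<le> m \<longrightarrow> bounded (range (mderiv j F))) \<and>
     (\<gamma> > 0 \<longrightarrow> (\<exists>M. \<forall>j x y. mabs j = m \<longrightarrow>
         \<bar>mderiv j F x - mderiv j F y\<bar> \<le> M * dist x y powr \<gamma>))"

definition holder_grad_seminorm :: "nat \<Rightarrow> real \<Rightarrow> (real^('n::finite) \<Rightarrow> real) \<Rightarrow> (real^'n) set \<Rightarrow> ereal" where
  "holder_grad_seminorm m \<gamma> F E =
     Sup (insert 0 {ereal (\<bar>mderiv j F x - mderiv j F y\<bar> / dist x y powr \<gamma>) | j x y.
                      mabs j = m \<and> x \<in> E \<and> y \<in> E \<and> x \<noteq> y})"

definition nbhd :: "(real^('n::finite)) set \<Rightarrow> real \<Rightarrow> (real^'n) set" where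
  "nbhd K \<epsilon> = (\<Union>x\<in>K. ball x \<epsilon>)"

definition compression_map :: "real \<Rightarrow> (real \<Rightarrow> real) \<Rightarrow> bool" where
  "compression_map \<epsilon> \<eta> \<longleftrightarrow>
     (\<exists>I :: (real \<times> real) set. finite I \<and> (\<forall>p\<in>I. fst p < snd p) \<and>
        pairwise (\<lambda>p q. disjnt {fst p<..<snd p} {fst q<..<snd q}) I \<and>
        (\<Sum>p\<in>I. snd p - fst p) < \<epsilon> \<and>
        (\<forall>t. \<eta> t = (let U = (\<Union>p\<in>I. {fst p<..<snd p}) in
                      if 0 \<le> t then integral {0..t} (indicator U)
                      else - integral {t..0} (indicator U))))"

type_synonym 'n jet = "'n mindex \<Rightarrow> real^'n \<Rightarrow> real"

definition jet_rem :: "nat \<Rightarrow> ('n::finite) jet \<Rightarrow> 'n mindex \<Rightarrow> real^'n \<Rightarrow> real^'n \<Rightarrow> real" where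
  "jet_rem m f j x y = f j x -
     (\<Sum>l\<in>{l. mabs (\<lambda>i. j i + l i) \<le> m}. (1 / mfact l) * f (\<lambda>i. j i + l i) y * mpow (x - y) l)"

definition jet_norm :: "nat \<Rightarrow> real \<Rightarrow> (real^('n::finite)) set \<Rightarrow> 'n jet \<Rightarrow> ereal" where
  "jet_norm m \<gamma> K f =
     Sup ({ereal \<bar>f j x\<bar> | j x. mabs j \<le> m \<and> x \<in> K} \<union>
          {ereal (\<bar>jet_rem m f j x y\<bar> / dist x y powr (real m + \<gamma> - real (mabs j))) | j x y.
              mabs j \<le> m \<and> x \<in> K \<and> y \<in> K \<and> x \<noteq> y})"

end

theory Submission
  imports Defs
begin

text \<open>Since the derivatives of orders \<open>1..m\<close> of \<open>F\<close> vanish on \<open>K\<close>, Taylor's formula along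
  segments bounds \<open>\<bar>F x - F y\<bar>\<close> by \<open>\<bar>x - y\<bar>^m\<close> times the oscillation of the \<open>m\<close>-th derivatives
  near \<open>K\<close>. That oscillation is \<open>o(1)\<close> by uniform continuity when \<open>\<gamma> = 0\<close> and
  \<open>o(\<bar>x - y\<bar>^\<gamma>)\<close> by the Hoelder hypothesis when \<open>\<gamma> > 0\<close>. Hence
  \<open>\<bar>F x - F y\<bar> \<le> \<omega>(r) \<bar>x - y\<bar>^(m+\<gamma>)\<close> whenever \<open>\<bar>x - y\<bar> \<le> r\<close>, with \<open>\<omega>(r) \<rightarrow> 0\<close>.
  A compression map \<open>\<eta>\<close> of level \<open>\<epsilon>\<close> is 1-Lipschitz with oscillation at most \<open>\<epsilon>\<close>, and the only
  nonzero remainder of the compressed jet is \<open>\<eta>(F x) - \<eta>(F y)\<close>. For \<open>\<bar>x - y\<bar> \<le> r = \<epsilon>^(1/(2(m+\<gamma>)))\<close>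
  it is at most \<open>\<omega>(r) \<bar>x - y\<bar>^(m+\<gamma>)\<close>; for larger \<open>\<bar>x - y\<bar>\<close> it is at most
  \<open>\<epsilon> \<le> \<surd>\<epsilon> \<bar>x - y\<bar>^(m+\<gamma>)\<close>.\<close>

section \<open>Compression maps\<close>

lemma signed_integral_diff:
  fixes f :: "real \<Rightarrow> real"
  assumes f: "\<And>a b. f integrable_on {a..b}" and "t \<le> s"
  shows "(if 0 \<le> s then integral {0..s} f else - integral {s..0} f)
       - (if 0 \<le> t then integral {0..t} f else - integral {t..0} f) = integral {t..s} f"
proof (cases "0 \<le> t")
  case True
  then show ?thesis
    using Henstock_Kurzweil_Integration.integral_combine[OF True \<open>t \<le> s\<close> f] \<open>t \<le> s\<close> by simp
next
  case False
  then show ?thesis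
    using Henstock_Kurzweil_Integration.integral_combine[of t 0 s, OF _ _ f]
      Henstock_Kurzweil_Integration.integral_combine[of t s 0, OF \<open>t \<le> s\<close> _ f]
    by (cases "0 \<le> s") simp_all
qed

lemma compression_map_measure_repr:
  assumes "compression_map \<epsilon> \<eta>"
  obtains U where "U \<in> lmeasurable" "measure lebesgue U < \<epsilon>"
    "\<And>t s. t \<le> s \<Longrightarrow> \<eta> s - \<eta> t = measure lebesgue (U \<inter> {t..s})"
proof -
  obtain I :: "(real \<times> real) set" where fin: "finite I" and ord: "\<forall>p\<in>I. fst p < snd p"
    and len: "(\<Sum>p\<in>I. snd p - fst p) < \<epsilon>"
    and eta: "\<And>t. \<eta> t = (let U = (\<Union>p\<in>I. {fst p<..<snd p}) in
                      if 0 \<le> t then integral {0..t} (indicator U)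
                      else - integral {t..0} (indicator U))"
    using assms unfolding compression_map_def by blast
  define U where "U = (\<Union>p\<in>I. {fst p<..<snd p})"
  have eta_U: "\<eta> t = (if 0 \<le> t then integral {0..t} (indicator U) else - integral {t..0} (indicator U))" for t
    using eta[of t] unfolding U_def Let_def by simp
  have closed_cover: "(\<Union>p\<in>I. {fst p..snd p}) \<in> lmeasurable"
    using fin by (intro fmeasurable.finite_UN) auto
  have U_sub: "U \<subseteq> (\<Union>p\<in>I. {fst p..snd p})" unfolding U_def by auto
  moreover have U_sets: "U \<in> sets lebesgue" unfolding U_def by (intro sets.finite_UN fin) auto
  ultimately have U_lm: "U \<in> lmeasurable"
    using closed_cover fmeasurableI2 by blast
  have "measure lebesgue U \<le> measure lebesgue (\<Union>p\<in>I. {fst p..snd p})"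
    using U_sub U_sets closed_cover by (intro measure_mono_fmeasurable)
  also have "\<dots> \<le> (\<Sum>p\<in>I. measure lebesgue {fst p..snd p})"
    using fin by (intro measure_UNION_le) auto
  also have "\<dots> = (\<Sum>p\<in>I. snd p - fst p)"
    using ord by (intro sum.cong) auto
  finally have "measure lebesgue U < \<epsilon>" using len by linarith
  moreover have "\<eta> s - \<eta> t = measure lebesgue (U \<inter> {t..s})" if "t \<le> s" for t s
  proof -
    have lm: "U \<inter> {a..b} \<in> lmeasurable" for a b :: real
      using U_lm by (intro fmeasurable_Int_fmeasurable) auto
    have intg: "indicat_real U integrable_on {a..b}" for a b :: real
      using lm integrable_on_indicator by blast
    have "\<eta> s - \<eta> t = integral {t..s} (indicator U)"
      unfolding eta_U using signed_integral_diff[OF intg that] .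
    also have "\<dots> = measure lebesgue (U \<inter> {t..s})"
      using integral_indicator[OF lm] by (simp add: Int_commute)
    finally show ?thesis .
  qed
  ultimately show thesis using that U_lm by blast
qed

lemma compression_map_increment_bounds:
  assumes "compression_map \<epsilon> \<eta>" "t \<le> s"
  shows "0 \<le> \<eta> s - \<eta> t" "\<eta> s - \<eta> t \<le> s - t" "\<eta> s - \<eta> t \<le> \<epsilon>"
proof -
  obtain U where U: "U \<in> lmeasurable" "measure lebesgue U < \<epsilon>"
    and incr: "\<eta> s - \<eta> t = measure lebesgue (U \<inter> {t..s})"
    using compression_map_measure_repr[OF assms(1)] assms(2) by metis
  show "0 \<le> \<eta> s - \<eta> t" by (simp add: incr)
  have "measure lebesgue (U \<inter> {t..s}) \<le> measure lebesgue {t..s}"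
    using U by (intro measure_mono_fmeasurable) auto
  then show "\<eta> s - \<eta> t \<le> s - t" using assms(2) by (simp add: incr)
  have "measure lebesgue (U \<inter> {t..s}) \<le> measure lebesgue U"
    using U by (intro measure_mono_fmeasurable) auto
  then show "\<eta> s - \<eta> t \<le> \<epsilon>" using U by (simp add: incr)
qed

lemma compression_map_lipschitz:
  assumes "compression_map \<epsilon> \<eta>"
  shows "\<bar>\<eta> s - \<eta> t\<bar> \<le> \<bar>s - t\<bar>"
  using compression_map_increment_bounds[OF assms, of s t] compression_map_increment_bounds[OF assms, of t s]
  by (cases "t \<le> s") auto

lemma compression_map_oscillation:
  assumes "compression_map \<epsilon> \<eta>"
  shows "\<bar>\<eta> s - \<eta> t\<bar> \<le> \<epsilon>"
  using compression_map_increment_bounds[OF assms, of s t] compression_map_increment_bounds[OF assms, of t s]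
  by (cases "t \<le> s") auto

lemma compression_map_0: "compression_map \<epsilon> \<eta> \<Longrightarrow> \<eta> 0 = 0"
  unfolding compression_map_def by (auto simp: Let_def)

lemma compression_map_abs_le:
  assumes "compression_map \<epsilon> \<eta>"
  shows "\<bar>\<eta> t\<bar> \<le> \<epsilon>"
  using compression_map_oscillation[OF assms, of t 0] compression_map_0[OF assms] by simp

section \<open>Partial derivatives of \<open>C\<^sup>m\<close> functions\<close>

lemma Cm_continuous_on_iterD: "Cm m F \<Longrightarrow> length ds \<le> m \<Longrightarrow> continuous_on UNIV (iterD ds F)"
  unfolding Cm_def by blast

lemma Cm_iterD_has_real_derivative_axis:
  assumes "Cm m F" "length ds < m"
  shows "((\<lambda>t. iterD ds F (z + t *\<^sub>R axis i 1)) has_real_derivative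
           iterD (i#ds) F (z + s *\<^sub>R axis i 1)) (at s)"
proof -
  define w where "w = z + s *\<^sub>R axis i 1"
  have "(\<lambda>t. iterD ds F (w + t *\<^sub>R axis i 1)) differentiable (at 0)"
    using assms unfolding Cm_def by blast
  then have "((\<lambda>t. iterD ds F (w + t *\<^sub>R axis i 1)) has_real_derivative
       deriv (\<lambda>t. iterD ds F (w + t *\<^sub>R axis i 1)) 0) (at 0)"
    using DERIV_deriv_iff_real_differentiable by blast
  then have "((\<lambda>t. iterD ds F (w + t *\<^sub>R axis i 1)) has_real_derivative iterD (i#ds) F w) (at 0)"
    by (simp add: partial_deriv_def)
  moreover have "(\<lambda>t. iterD ds F (w + t *\<^sub>R axis i 1)) = (\<lambda>t. iterD ds F (z + (t + s) *\<^sub>R axis i 1))"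
    by (simp add: w_def scaleR_add_left algebra_simps)
  ultimately have "((\<lambda>t. iterD ds F (z + (t + s) *\<^sub>R axis i 1)) has_real_derivative iterD (i#ds) F w) (at 0)"
    by simp
  then have "((\<lambda>t. iterD ds F (z + t *\<^sub>R axis i 1)) has_real_derivative iterD (i#ds) F w) (at (0 + s))"
    using DERIV_shift[of "\<lambda>t. iterD ds F (z + t *\<^sub>R axis i 1)" "iterD (i#ds) F w" 0 s] by simp
  then show ?thesis by (simp add: w_def)
qed

definition vec_restrict :: "'n::finite set \<Rightarrow> real^'n \<Rightarrow> real^'n" where
  "vec_restrict S h = (\<chi> i. if i \<in> S then h$i else 0)"

lemma vec_restrict_insert: "k \<notin> S \<Longrightarrow> vec_restrict (insert k S) h = vec_restrict S h + (h$k) *\<^sub>R axis k 1"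
  by (auto simp: vec_restrict_def vec_eq_iff axis_def)

lemma vec_restrict_UNIV: "vec_restrict UNIV h = h" by (simp add: vec_restrict_def vec_eq_iff)

lemma norm_vec_restrict_add_axis:
  assumes "k \<notin> S" "\<bar>t\<bar> \<le> \<bar>h$k\<bar>"
  shows "norm (vec_restrict S h + t *\<^sub>R axis k 1) \<le> norm h"
  by (rule norm_le_componentwise_cart) (use assms in \<open>auto simp: vec_restrict_def axis_def\<close>)

lemma coordinatewise_increment_bound:
  fixes f :: "real^'n::finite \<Rightarrow> real" and p :: "'n \<Rightarrow> real^'n \<Rightarrow> real"
  assumes partials: "\<And>z i s. ((\<lambda>t. f (z + t *\<^sub>R axis i 1)) has_real_derivative p i (z + s *\<^sub>R axis i 1)) (at s)"
    and near: "\<And>z i. norm (z - w) < d \<Longrightarrow> \<bar>p i z - p i w\<bar> \<le> e"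
    and e: "e > 0" and h: "norm h < d"
  shows "\<bar>f (w + vec_restrict S h) - f w - (\<Sum>i\<in>S. h$i * p i w)\<bar> \<le> e * real (card S) * norm h"
\<comment> \<open>Move from \<open>w\<close> to \<open>w + h\<close> one coordinate at a time, using the mean value bound on each segment.\<close>
proof -
  have "finite S" by simp
  then show ?thesis
  proof (induction S rule: finite_induct)
    case empty
    have "vec_restrict {} h = 0" by (simp add: vec_restrict_def vec_eq_iff)
    then have "w + vec_restrict {} h = w" by simp
    then show ?case by (simp only: sum.empty card.empty)
  next
    case (insert k S)
    define z where "z = w + vec_restrict S h"
    define q where "q t = f (z + t *\<^sub>R axis k 1) - p k w * t" for t
    have qd: "(q has_field_derivative (p k (z + t *\<^sub>R axis k 1) - p k w)) (at t within closed_segment 0 (h$k))" for t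
    proof -
      have "((\<lambda>t. p k w * t) has_real_derivative p k w * 1) (at t)"
        by (rule DERIV_cmult[OF DERIV_ident])
      from DERIV_diff[OF partials this]
      have "(q has_real_derivative (p k (z + t *\<^sub>R axis k 1) - p k w)) (at t)"
        unfolding q_def[abs_def] by (simp only: mult_1_right)
      then show ?thesis by (rule has_field_derivative_at_within)
    qed
    have qb: "norm (p k (z + t *\<^sub>R axis k 1) - p k w) \<le> e" if "t \<in> closed_segment 0 (h$k)" for t
    proof -
      have "t \<in> (if 0 \<le> h$k then {0..h$k} else {h$k..0})" using that by (simp only: closed_segment_eq_real_ivl)
      then have "\<bar>t\<bar> \<le> \<bar>h$k\<bar>" by (cases "0 \<le> h$k") auto
      then have "norm (vec_restrict S h + t *\<^sub>R axis k 1) \<le> norm h"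
        using insert.hyps by (intro norm_vec_restrict_add_axis) auto
      then have "norm ((z + t *\<^sub>R axis k 1) - w) < d" using h by (simp add: z_def)
      then show ?thesis using near by simp
    qed
    have "norm (q (h$k) - q 0) \<le> e * norm (h$k - 0)"
      by (rule field_differentiable_bound[OF convex_closed_segment qd qb ends_in_segment(2) ends_in_segment(1)])
    also have "\<dots> \<le> e * norm h" using e by (simp add: component_le_norm_cart)
    finally have A: "\<bar>q (h$k) - q 0\<bar> \<le> e * norm h" by simp
    have "f (w + vec_restrict (insert k S) h) - f w - (\<Sum>i\<in>insert k S. h$i * p i w)
        = (q (h$k) - q 0) + (f (w + vec_restrict S h) - f w - (\<Sum>i\<in>S. h$i * p i w))"
      using insert.hyps by (simp add: vec_restrict_insert q_def z_def add.assoc mult.commute)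
    then have "\<bar>f (w + vec_restrict (insert k S) h) - f w - (\<Sum>i\<in>insert k S. h$i * p i w)\<bar>
         \<le> e * norm h + e * real (card S) * norm h"
      using A insert.IH by linarith
    then show ?case using insert.hyps by (simp add: algebra_simps)
  qed
qed

lemma has_derivative_of_continuous_partials:
  fixes f :: "real^'n::finite \<Rightarrow> real" and p :: "'n \<Rightarrow> real^'n \<Rightarrow> real"
  assumes partials: "\<And>z i s. ((\<lambda>t. f (z + t *\<^sub>R axis i 1)) has_real_derivative p i (z + s *\<^sub>R axis i 1)) (at s)"
    and cont: "\<And>i. continuous_on UNIV (p i)"
  shows "(f has_derivative (\<lambda>h. \<Sum>i\<in>UNIV. h$i * p i w)) (at w)"
  unfolding has_derivative_at_alt
proof (intro conjI allI impI)
  show "bounded_linear (\<lambda>h. \<Sum>i\<in>UNIV. h$i * p i w)"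
    by (rule linear_conv_bounded_linear[THEN iffD1]) (auto simp: linear_iff sum.distrib algebra_simps sum_distrib_left)
  fix e :: real assume e: "e > 0"
  define N where "N = real CARD('n)"
  have N: "N > 0" by (simp add: N_def)
  define e' where "e' = e / N"
  have e': "e' > 0" using e N by (simp add: e'_def)
  have "\<forall>\<^sub>F z in at w. \<forall>i. dist (p i z) (p i w) < e'"
  proof (rule eventually_all_finite)
    fix i
    have "isCont (p i) w" using cont[of i] by (simp add: continuous_on_eq_continuous_at)
    then have "(p i \<longlongrightarrow> p i w) (at w)" by (simp add: isCont_def)
    then show "\<forall>\<^sub>F z in at w. dist (p i z) (p i w) < e'" using e' tendstoD by blast
  qed
  then obtain d where d: "d > 0" and close: "\<And>z i. z \<noteq> w \<Longrightarrow> dist z w < d \<Longrightarrow> dist (p i z) (p i w) < e'"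
    unfolding eventually_at by blast
  have near: "\<bar>p i z - p i w\<bar> \<le> e'" if "norm (z - w) < d" for z i
    using close[of z i] that e' by (cases "z = w") (auto simp: dist_norm)
  show "\<exists>d>0. \<forall>y. norm (y - w) < d \<longrightarrow>
       norm (f y - f w - (\<Sum>i\<in>UNIV. (y - w) $ i * p i w)) \<le> e * norm (y - w)"
  proof (intro exI[of _ d] conjI allI impI d)
    fix y assume y: "norm (y - w) < d"
    define h where "h = y - w"
    have "\<bar>f (w + vec_restrict UNIV h) - f w - (\<Sum>i\<in>UNIV. h$i * p i w)\<bar> \<le> e' * N * norm h"
      using coordinatewise_increment_bound[OF partials near e', where h=h and S=UNIV] y
      by (simp add: h_def N_def)
    then have "\<bar>f y - f w - (\<Sum>i\<in>UNIV. h$i * p i w)\<bar> \<le> e' * N * norm h"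
      by (simp add: vec_restrict_UNIV h_def)
    then show "norm (f y - f w - (\<Sum>i\<in>UNIV. (y - w) $ i * p i w)) \<le> e * norm (y - w)"
      using N by (simp add: e'_def h_def)
  qed
qed

lemma second_difference_mvt:
  fixes f :: "real^'n::finite \<Rightarrow> real" and D1 :: "'n \<Rightarrow> real^'n \<Rightarrow> real"
    and D2 :: "'n \<Rightarrow> 'n \<Rightarrow> real^'n \<Rightarrow> real"
  assumes partials1: "\<And>z i s. ((\<lambda>t. f (z + t *\<^sub>R axis i 1)) has_real_derivative D1 i (z + s *\<^sub>R axis i 1)) (at s)"
    and partials2: "\<And>z i j s. ((\<lambda>t. D1 i (z + t *\<^sub>R axis j 1)) has_real_derivative D2 j i (z + s *\<^sub>R axis j 1)) (at s)"
    and h: "h > 0"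
  shows "\<exists>\<xi>. norm (\<xi> - x) \<le> 2 * h \<and>
     f (x + h *\<^sub>R axis j 1 + h *\<^sub>R axis i 1) - f (x + h *\<^sub>R axis i 1) - f (x + h *\<^sub>R axis j 1) + f x
       = h * (h * D2 j i \<xi>)"
proof -
  define u where "u s = f ((x + h *\<^sub>R axis j 1) + s *\<^sub>R axis i 1) - f (x + s *\<^sub>R axis i 1)" for s
  have ud: "(u has_real_derivative (D1 i ((x + h *\<^sub>R axis j 1) + s *\<^sub>R axis i 1) - D1 i (x + s *\<^sub>R axis i 1))) (at s)" for s
    unfolding u_def[abs_def] by (rule DERIV_diff[OF partials1 partials1])
  obtain \<sigma> where \<sigma>: "0 < \<sigma>" "\<sigma> < h"
    and e1: "u h - u 0 = (h - 0) * (D1 i ((x + h *\<^sub>R axis j 1) + \<sigma> *\<^sub>R axis i 1) - D1 i (x + \<sigma> *\<^sub>R axis i 1))"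
    using MVT2[OF h ud] by blast
  define w where "w t = D1 i ((x + \<sigma> *\<^sub>R axis i 1) + t *\<^sub>R axis j 1)" for t
  have wd: "(w has_real_derivative D2 j i ((x + \<sigma> *\<^sub>R axis i 1) + t *\<^sub>R axis j 1)) (at t)" for t
    unfolding w_def[abs_def] by (rule partials2)
  obtain \<tau> where \<tau>: "0 < \<tau>" "\<tau> < h"
    and e2: "w h - w 0 = (h - 0) * D2 j i ((x + \<sigma> *\<^sub>R axis i 1) + \<tau> *\<^sub>R axis j 1)"
    using MVT2[OF h wd] by blast
  have "w h = D1 i ((x + h *\<^sub>R axis j 1) + \<sigma> *\<^sub>R axis i 1)"
    unfolding w_def by (simp add: algebra_simps)
  moreover have "w 0 = D1 i (x + \<sigma> *\<^sub>R axis i 1)" by (simp add: w_def)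
  ultimately have e3: "u h - u 0 = h * (h * D2 j i ((x + \<sigma> *\<^sub>R axis i 1) + \<tau> *\<^sub>R axis j 1))"
    using e1 e2 by simp
  have "norm (((x + \<sigma> *\<^sub>R axis i 1) + \<tau> *\<^sub>R axis j 1) - x) \<le> norm (\<sigma> *\<^sub>R axis i (1::real)) + norm (\<tau> *\<^sub>R axis j (1::real))"
  proof -
    have "((x + \<sigma> *\<^sub>R axis i 1) + \<tau> *\<^sub>R axis j 1) - x = \<sigma> *\<^sub>R axis i (1::real) + \<tau> *\<^sub>R axis j 1" by simp
    then show ?thesis by (metis norm_triangle_ineq)
  qed
  also have "\<dots> \<le> 2 * h" using \<sigma> \<tau> by simp
  finally have n: "norm (((x + \<sigma> *\<^sub>R axis i 1) + \<tau> *\<^sub>R axis j 1) - x) \<le> 2 * h" .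
  have "u h - u 0 = f (x + h *\<^sub>R axis j 1 + h *\<^sub>R axis i 1) - f (x + h *\<^sub>R axis i 1) - f (x + h *\<^sub>R axis j 1) + f x"
    by (simp add: u_def)
  then show ?thesis using e3 n by metis
qed

lemma partial_derivatives_commute:
  fixes f :: "real^'n::finite \<Rightarrow> real" and D1 :: "'n \<Rightarrow> real^'n \<Rightarrow> real"
    and D2 :: "'n \<Rightarrow> 'n \<Rightarrow> real^'n \<Rightarrow> real"
  assumes partials1: "\<And>z i s. ((\<lambda>t. f (z + t *\<^sub>R axis i 1)) has_real_derivative D1 i (z + s *\<^sub>R axis i 1)) (at s)"
    and partials2: "\<And>z i j s. ((\<lambda>t. D1 i (z + t *\<^sub>R axis j 1)) has_real_derivative D2 j i (z + s *\<^sub>R axis j 1)) (at s)"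
    and cont: "\<And>i j. continuous_on UNIV (D2 j i)"
  shows "D2 j i x = D2 i j x"
proof (rule ccontr)
  assume ne: "D2 j i x \<noteq> D2 i j x"
  define e where "e = \<bar>D2 j i x - D2 i j x\<bar> / 2"
  have e: "e > 0" using ne by (simp add: e_def)
  obtain r1 where r1: "r1 > 0" "\<And>y. dist y x < r1 \<Longrightarrow> dist (D2 j i y) (D2 j i x) < e"
    using cont[of j i] e unfolding continuous_on_iff by (metis UNIV_I)
  obtain r2 where r2: "r2 > 0" "\<And>y. dist y x < r2 \<Longrightarrow> dist (D2 i j y) (D2 i j x) < e"
    using cont[of i j] e unfolding continuous_on_iff by (metis UNIV_I)
  define h where "h = min r1 r2 / 4"
  have h: "h > 0" using r1 r2 by (simp add: h_def)
  obtain \<xi>1 where x1: "norm (\<xi>1 - x) \<le> 2 * h"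
    "f (x + h *\<^sub>R axis j 1 + h *\<^sub>R axis i 1) - f (x + h *\<^sub>R axis i 1) - f (x + h *\<^sub>R axis j 1) + f x
       = h * (h * D2 j i \<xi>1)"
    using second_difference_mvt[OF partials1 partials2 h, of x j i] by blast
  obtain \<xi>2 where x2: "norm (\<xi>2 - x) \<le> 2 * h"
    "f (x + h *\<^sub>R axis i 1 + h *\<^sub>R axis j 1) - f (x + h *\<^sub>R axis j 1) - f (x + h *\<^sub>R axis i 1) + f x
       = h * (h * D2 i j \<xi>2)"
    using second_difference_mvt[OF partials1 partials2 h, of x i j] by blast
  have "x + h *\<^sub>R axis i 1 + h *\<^sub>R axis j 1 = x + h *\<^sub>R axis j 1 + h *\<^sub>R axis i 1"
    by (simp add: algebra_simps)
  then have "h * (h * D2 j i \<xi>1) = h * (h * D2 i j \<xi>2)" using x1(2) x2(2) by (simp only:)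
  then have eq: "D2 j i \<xi>1 = D2 i j \<xi>2" using h by simp
  have "dist \<xi>1 x < r1" using x1(1) h r1 r2 by (simp add: dist_norm h_def)
  then have a: "\<bar>D2 j i \<xi>1 - D2 j i x\<bar> < e" using r1(2) by (simp add: dist_real_def)
  have "dist \<xi>2 x < r2" using x2(1) h r1 r2 by (simp add: dist_norm h_def)
  then have b: "\<bar>D2 i j \<xi>2 - D2 i j x\<bar> < e" using r2(2) by (simp add: dist_real_def)
  have "\<bar>D2 j i x - D2 i j x\<bar> \<le> \<bar>D2 j i \<xi>1 - D2 j i x\<bar> + \<bar>D2 i j \<xi>2 - D2 i j x\<bar>" using eq by linarith
  then show False using a b unfolding e_def by (smt (verit) field_sum_of_halves)
qed

lemma Cm_iterD_swap:
  assumes "Cm m F" "length b + 2 \<le> m"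
  shows "iterD (i#j#b) F = iterD (j#i#b) F"
proof
  fix x
  have "iterD (j#i#b) F x = iterD (i#j#b) F x"
  proof (rule partial_derivatives_commute[of "iterD b F" "\<lambda>i. iterD (i#b) F" "\<lambda>j i. iterD (j#i#b) F"])
    show "((\<lambda>t. iterD b F (z + t *\<^sub>R axis i 1)) has_real_derivative iterD (i#b) F (z + s *\<^sub>R axis i 1)) (at s)" for z i s
      using assms by (intro Cm_iterD_has_real_derivative_axis) auto
    show "((\<lambda>t. iterD (i#b) F (z + t *\<^sub>R axis j 1)) has_real_derivative iterD (j#i#b) F (z + s *\<^sub>R axis j 1)) (at s)" for z i j s
      using assms by (intro Cm_iterD_has_real_derivative_axis) auto
    show "continuous_on UNIV (iterD (j#i#b) F)" for i j
      using assms by (intro Cm_continuous_on_iterD) auto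
  qed
  then show "iterD (i#j#b) F x = iterD (j#i#b) F x" by simp
qed

lemma Cm_iterD_move_to_front:
  assumes "Cm m F" "length (as @ i # bs) \<le> m"
  shows "iterD (as @ i # bs) F = iterD (i # as @ bs) F"
  using assms(2)
proof (induction as)
  case Nil
  then show ?case by simp
next
  case (Cons a as)
  then have "iterD ((a # as) @ i # bs) F = iterD (a # i # as @ bs) F" by simp
  also have "\<dots> = iterD (i # a # as @ bs) F"
    using Cons.prems by (intro Cm_iterD_swap[OF assms(1)]) simp
  finally show ?case by simp
qed

lemma Cm_iterD_mset_eq:
  assumes "Cm m F"
  shows "mset ds = mset ds' \<Longrightarrow> length ds \<le> m \<Longrightarrow> iterD ds F = iterD ds' F"
proof (induction ds arbitrary: ds')
  case Nil
  then show ?case by simp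
next
  case (Cons i r)
  have "i \<in> set ds'" using Cons.prems(1) by (metis list.set_intros(1) set_mset_mset)
  then obtain as bs where ds': "ds' = as @ i # bs" by (meson split_list)
  have m: "mset r = mset (as @ bs)" using Cons.prems(1) ds' by simp
  have l: "length ds' = length (i # r)" using Cons.prems(1) by (metis size_mset)
  have "iterD ds' F = iterD (i # as @ bs) F"
    using Cons.prems(2) l unfolding ds' by (intro Cm_iterD_move_to_front[OF assms]) simp
  also have "\<dots> = iterD (i # r) F" using Cons.IH[OF m] Cons.prems(2) by simp
  finally show ?case by simp
qed

lemma mabs_count_mset: "mabs (\<lambda>i. count (mset ds) i) = length ds"
proof (induction ds)
  case Nil
  then show ?case by (simp add: mabs_def)
next
  case (Cons a ds)
  have "(\<Sum>i\<in>UNIV. count (mset (a # ds)) i) = (\<Sum>i\<in>UNIV. count (mset ds) i + (if i = a then 1 else 0))"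
    by (intro sum.cong) auto
  also have "\<dots> = (\<Sum>i\<in>UNIV. count (mset ds) i) + 1" by (simp add: sum.distrib)
  finally show ?case using Cons by (simp add: mabs_def)
qed

lemma Cm_mderiv_count_mset:
  assumes "Cm m F" "length ds \<le> m"
  shows "mderiv (\<lambda>i. count (mset ds) i) F = iterD ds F"
proof -
  define ds' where "ds' = (SOME ds'. \<forall>i. count (mset ds') i = count (mset ds) i)"
  have "\<forall>i. count (mset ds') i = count (mset ds) i"
    unfolding ds'_def by (rule someI[of _ ds]) simp
  then have "mset ds' = mset ds" by (simp add: multiset_eqI)
  \<comment> \<open>\<open>mderiv\<close> differentiates in an order chosen by \<open>SOME\<close>; symmetry of the partial derivatives makes it irrelevant.\<close>
  then have "iterD ds F = iterD ds' F" using Cm_iterD_mset_eq[OF assms(1)] assms(2) by metis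
  then show ?thesis by (simp add: mderiv_def ds'_def)
qed

section \<open>Taylor estimate at a flat point\<close>

lemma sum_lists_length_Suc:
  fixes g :: "'n::finite list \<Rightarrow> 'a::comm_monoid_add"
  shows "(\<Sum>ds | length ds = Suc k. g ds) = (\<Sum>ds | length ds = k. \<Sum>i\<in>UNIV. g (i # ds))"
proof -
  have lists_Suc: "{ds. length ds = Suc k} = (\<lambda>(ds, i). i # ds) ` ({ds. length ds = k} \<times> UNIV)"
    by (auto simp: image_iff length_Suc_conv)
  have "inj_on (\<lambda>(ds, i). i # ds) ({ds::'n list. length ds = k} \<times> UNIV)"
    by (auto simp: inj_on_def)
  then show ?thesis
    unfolding lists_Suc by (simp add: sum.reindex sum.cartesian_product case_prod_unfold)
qed

definition coord_prod :: "real^('n::finite) \<Rightarrow> 'n list \<Rightarrow> real" where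
  "coord_prod v ds = prod_list (map (\<lambda>i. v $ i) ds)"

lemma abs_coord_prod_le: "\<bar>coord_prod v ds\<bar> \<le> norm v ^ length ds"
proof (induction ds)
  case Nil
  then show ?case by (simp add: coord_prod_def)
next
  case (Cons a ds)
  have "\<bar>coord_prod v (a # ds)\<bar> = \<bar>v $ a\<bar> * \<bar>coord_prod v ds\<bar>"
    by (simp add: coord_prod_def abs_mult)
  also have "\<dots> \<le> norm v * norm v ^ length ds"
    by (intro mult_mono Cons.IH component_le_norm_cart) auto
  finally show ?case by simp
qed

text \<open>The \<open>k\<close>-th derivative of \<open>t \<mapsto> F (y + t v)\<close>, written with non-commuted partial derivatives.\<close>

definition line_deriv :: "(real^('n::finite) \<Rightarrow> real) \<Rightarrow> real^'n \<Rightarrow> real^'n \<Rightarrow> nat \<Rightarrow> real \<Rightarrow> real" where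
  "line_deriv F y v k t = (\<Sum>ds | length ds = k. coord_prod v ds * iterD ds F (y + t *\<^sub>R v))"

lemma line_deriv_0: "line_deriv F y v 0 t = F (y + t *\<^sub>R v)"
  by (simp add: line_deriv_def coord_prod_def)

lemma Cm_iterD_has_derivative_along_line:
  assumes "Cm m F" "length ds < m"
  shows "((\<lambda>t. iterD ds F (y + t *\<^sub>R v)) has_real_derivative
           (\<Sum>i\<in>UNIV. v $ i * iterD (i # ds) F (y + t *\<^sub>R v))) (at t)"
proof -
  have "(iterD ds F has_derivative (\<lambda>h. \<Sum>i\<in>UNIV. h $ i * iterD (i # ds) F (y + t *\<^sub>R v)))
          (at (y + t *\<^sub>R v))"
    using assms by (intro has_derivative_of_continuous_partials Cm_iterD_has_real_derivative_axis
        Cm_continuous_on_iterD) auto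
  moreover have "((\<lambda>t. y + t *\<^sub>R v) has_derivative (\<lambda>s. s *\<^sub>R v)) (at t)"
    by (auto intro!: derivative_eq_intros)
  ultimately have "((\<lambda>t. iterD ds F (y + t *\<^sub>R v)) has_derivative
          (\<lambda>s. \<Sum>i\<in>UNIV. (s *\<^sub>R v) $ i * iterD (i # ds) F (y + t *\<^sub>R v))) (at t)"
    using has_derivative_compose by fastforce
  moreover have "(\<lambda>s. \<Sum>i\<in>UNIV. (s *\<^sub>R v) $ i * iterD (i # ds) F (y + t *\<^sub>R v))
       = (*) (\<Sum>i\<in>UNIV. v $ i * iterD (i # ds) F (y + t *\<^sub>R v))"
    by (rule ext) (simp add: sum_distrib_left sum_distrib_right mult.assoc mult.commute)
  ultimately show ?thesis by (simp add: has_field_derivative_def)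
qed

lemma line_deriv_has_real_derivative:
  assumes "Cm m F" "k < m"
  shows "(line_deriv F y v k has_real_derivative line_deriv F y v (Suc k) t) (at t)"
proof -
  have "((\<lambda>t. \<Sum>ds | length ds = k. coord_prod v ds * iterD ds F (y + t *\<^sub>R v)) has_real_derivative
      (\<Sum>ds | length ds = k. coord_prod v ds * (\<Sum>i\<in>UNIV. v $ i * iterD (i # ds) F (y + t *\<^sub>R v)))) (at t)"
    using assms by (intro DERIV_sum DERIV_cmult Cm_iterD_has_derivative_along_line) auto
  moreover have "(\<Sum>ds | length ds = k. coord_prod v ds * (\<Sum>i\<in>UNIV. v $ i * iterD (i # ds) F (y + t *\<^sub>R v)))
      = line_deriv F y v (Suc k) t"
    unfolding line_deriv_def sum_lists_length_Suc
    by (simp add: sum_distrib_left coord_prod_def mult.assoc mult.left_commute)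
  ultimately show ?thesis unfolding line_deriv_def[abs_def] by simp
qed

lemma taylor_remainder_at_flat_point:
  assumes Cm: "Cm m F" and m: "m \<ge> 1"
    and flat: "\<And>ds. 1 \<le> length ds \<Longrightarrow> length ds \<le> m \<Longrightarrow> iterD ds F y = 0"
  obtains t where "0 < t" "t < 1"
    "F x - F y = (line_deriv F y (x - y) m t - line_deriv F y (x - y) m 0) / fact m"
proof -
  let ?G = "line_deriv F y (x - y)"
  have G_flat: "?G k 0 = 0" if "1 \<le> k" "k \<le> m" for k
    unfolding line_deriv_def using flat that by (intro sum.neutral) auto
  obtain t where t: "0 < t" "t < 1"
    and taylor: "?G 0 1 = (\<Sum>k<m. ?G k 0 / fact k * (1 - 0) ^ k) + ?G m t / fact m * (1 - 0) ^ m"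
    using Taylor_up[of m ?G "?G 0" 0 1 0] line_deriv_has_real_derivative[OF Cm] m by force
  have "(\<Sum>k<m. ?G k 0 / fact k * (1 - 0) ^ k) = (\<Sum>k<m. if k = 0 then F y else 0)"
    by (intro sum.cong) (auto simp: G_flat line_deriv_0)
  also have "\<dots> = F y" using m by simp
  finally have "F x - F y = ?G m t / fact m" using taylor by (simp add: line_deriv_0)
  with G_flat[of m] m show thesis using that t by simp
qed

lemma taylor_bound_at_flat_point:
  fixes F :: "real^'n::finite \<Rightarrow> real"
  assumes Cm: "Cm m F" and m: "m \<ge> 1"
    and flat: "\<And>ds. 1 \<le> length ds \<Longrightarrow> length ds \<le> m \<Longrightarrow> iterD ds F y = 0"
    and osc: "\<And>z ds. norm (z - y) \<le> norm (x - y) \<Longrightarrow> length ds = m \<Longrightarrow>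
                \<bar>iterD ds F z - iterD ds F y\<bar> \<le> B"
  shows "\<bar>F x - F y\<bar> \<le> real CARD('n) ^ m * norm (x - y) ^ m * B"
proof -
  define v where "v = x - y"
  obtain t where t: "0 < t" "t < 1"
    and rem: "F x - F y = (line_deriv F y v m t - line_deriv F y v m 0) / fact m"
    using taylor_remainder_at_flat_point[OF Cm m flat] unfolding v_def by metis
  have "\<bar>line_deriv F y v m t - line_deriv F y v m 0\<bar>
      = \<bar>\<Sum>ds | length ds = m. coord_prod v ds * (iterD ds F (y + t *\<^sub>R v) - iterD ds F y)\<bar>"
    by (simp add: line_deriv_def sum_subtractf algebra_simps)
  also have "\<dots> \<le> (\<Sum>ds | length ds = m. \<bar>coord_prod v ds * (iterD ds F (y + t *\<^sub>R v) - iterD ds F y)\<bar>)"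
    by (rule sum_abs)
  also have "\<dots> \<le> (\<Sum>ds\<in>{ds::'n list. length ds = m}. norm v ^ m * B)"
  proof (intro sum_mono)
    fix ds :: "'n list" assume "ds \<in> {ds. length ds = m}"
    moreover have "norm (y + t *\<^sub>R v - y) \<le> norm (x - y)"
      using t by (simp add: v_def mult_left_le_one_le)
    ultimately show "\<bar>coord_prod v ds * (iterD ds F (y + t *\<^sub>R v) - iterD ds F y)\<bar> \<le> norm v ^ m * B"
      unfolding abs_mult using abs_coord_prod_le[of v ds] osc by (intro mult_mono) auto
  qed
  also have "\<dots> = real CARD('n) ^ m * norm v ^ m * B"
    using card_lists_length_eq[of "UNIV::'n set" m] by simp
  finally have bound: "\<bar>line_deriv F y v m t - line_deriv F y v m 0\<bar> \<le> real CARD('n) ^ m * norm v ^ m * B" .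
  have "\<bar>F x - F y\<bar> = \<bar>line_deriv F y v m t - line_deriv F y v m 0\<bar> / fact m"
    using rem by (simp add: abs_divide)
  also have "\<dots> \<le> \<bar>line_deriv F y v m t - line_deriv F y v m 0\<bar> / 1"
    by (intro divide_left_mono) auto
  finally show ?thesis using bound by (simp add: v_def)
qed

section \<open>Uniform little-o estimate on \<open>K\<close>\<close>

lemma continuous_on_uniformly_near_compact:
  fixes f :: "'a::euclidean_space \<Rightarrow> 'b::metric_space"
  assumes f: "continuous_on UNIV f" and K: "compact K" and e: "e > 0"
  shows "\<forall>\<^sub>F \<rho> in at_right 0. \<forall>y\<in>K. \<forall>z. dist z y < \<rho> \<longrightarrow> dist (f z) (f y) \<le> e"
proof -
  define K1 where "K1 = {a + b | a b. a \<in> K \<and> b \<in> cball (0::'a) 1}"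
  have "compact K1" unfolding K1_def by (intro compact_sums K compact_cball)
  then have "uniformly_continuous_on K1 f"
    using f continuous_on_subset compact_uniformly_continuous by blast
  then obtain d where d: "d > 0"
    and unif: "\<And>z y. z \<in> K1 \<Longrightarrow> y \<in> K1 \<Longrightarrow> dist z y < d \<Longrightarrow> dist (f z) (f y) < e"
    using e unfolding uniformly_continuous_on_def by metis
  have K1I: "z \<in> K1" if "y \<in> K" "dist z y \<le> 1" for y z
  proof -
    have "z = y + (z - y)" "z - y \<in> cball 0 1" using that(2) by (auto simp: dist_norm norm_minus_commute)
    then show ?thesis unfolding K1_def using that(1) by blast
  qed
  show ?thesis
    unfolding eventually_at_right_field
  proof (intro exI[of _ "min d 1"] conjI allI impI ballI)
    fix \<rho> y z assume "0 < \<rho>" "\<rho> < min d 1" "y \<in> K" "dist z y < \<rho>"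
    then show "dist (f z) (f y) \<le> e"
      using unif[of z y] K1I[of y z] K1I[of y y] by simp
  qed (use d in simp)
qed

lemma Cm_iterD_uniform_oscillation:
  fixes F :: "real^'n::finite \<Rightarrow> real"
  assumes Cm: "Cm m F" and K: "compact K" and e: "e > 0"
  shows "\<forall>\<^sub>F \<rho> in at_right 0. \<forall>ds\<in>{ds. length ds = m}. \<forall>y\<in>K. \<forall>z.
           dist z y < \<rho> \<longrightarrow> \<bar>iterD ds F z - iterD ds F y\<bar> \<le> e"
proof (rule eventually_ball_finite)
  show "finite {ds::'n list. length ds = m}"
    using finite_lists_length_eq[of "UNIV :: 'n set" m] by simp
  show "\<forall>ds\<in>{ds. length ds = m}. \<forall>\<^sub>F \<rho> in at_right 0. \<forall>y\<in>K. \<forall>z.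
           dist z y < \<rho> \<longrightarrow> \<bar>iterD ds F z - iterD ds F y\<bar> \<le> e"
    using continuous_on_uniformly_near_compact[OF Cm_continuous_on_iterD[OF Cm] K e]
    by (simp add: dist_real_def)
qed

lemma iterD_diff_le_holder_grad_seminorm:
  assumes Cm: "Cm m F" and ds: "length ds = m" and zy: "z \<in> E" "y \<in> E" "z \<noteq> y"
    and c: "holder_grad_seminorm m \<gamma> F E \<le> ereal c"
  shows "\<bar>iterD ds F z - iterD ds F y\<bar> \<le> c * dist z y powr \<gamma>"
proof -
  let ?j = "\<lambda>i. count (mset ds) i"
  have "mabs ?j = m" "mderiv ?j F = iterD ds F"
    using mabs_count_mset[of ds] Cm_mderiv_count_mset[OF Cm, of ds] ds by auto
  then have "ereal (\<bar>iterD ds F z - iterD ds F y\<bar> / dist z y powr \<gamma>) \<le> holder_grad_seminorm m \<gamma> F E"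
    unfolding holder_grad_seminorm_def by (intro Sup_upper) (use zy in force)
  then have "ereal (\<bar>iterD ds F z - iterD ds F y\<bar> / dist z y powr \<gamma>) \<le> ereal c"
    using c by (rule order_trans)
  then have "\<bar>iterD ds F z - iterD ds F y\<bar> / dist z y powr \<gamma> \<le> c" by simp
  moreover have "dist z y powr \<gamma> > 0" using zy by simp
  ultimately show ?thesis by (simp add: divide_le_eq)
qed

lemma holder_grad_seminorm_iterD_oscillation:
  fixes F :: "real^'n::finite \<Rightarrow> real"
  assumes Cm: "Cm m F" and hol: "((\<lambda>\<epsilon>. holder_grad_seminorm m \<gamma> F (nbhd K \<epsilon>)) \<longlongrightarrow> 0) (at_right 0)"
    and e: "e > 0"
  shows "\<forall>\<^sub>F \<rho> in at_right 0. \<forall>ds\<in>{ds. length ds = m}. \<forall>y\<in>K. \<forall>z.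
           dist z y < \<rho> \<longrightarrow> \<bar>iterD ds F z - iterD ds F y\<bar> \<le> e * dist z y powr \<gamma>"
proof -
  have "\<forall>\<^sub>F \<rho> in at_right 0. holder_grad_seminorm m \<gamma> F (nbhd K \<rho>) < ereal e"
    using order_tendstoD(2)[OF hol] e by simp
  then show ?thesis
  proof (rule eventually_mono, intro ballI allI impI)
    fix \<rho> y z and ds :: "'n list"
    assume small: "holder_grad_seminorm m \<gamma> F (nbhd K \<rho>) < ereal e"
      and "ds \<in> {ds. length ds = m}" "y \<in> K" "dist z y < \<rho>"
    moreover have "0 < \<rho>" using \<open>dist z y < \<rho>\<close> zero_le_dist[of z y] by linarith
    moreover have "y \<in> nbhd K \<rho>" "z \<in> nbhd K \<rho>"
      using \<open>y \<in> K\<close> \<open>dist z y < \<rho>\<close> \<open>0 < \<rho>\<close> by (auto simp: nbhd_def dist_commute intro!: bexI[of _ y])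
    ultimately show "\<bar>iterD ds F z - iterD ds F y\<bar> \<le> e * dist z y powr \<gamma>"
      using iterD_diff_le_holder_grad_seminorm[OF Cm, of ds z "nbhd K \<rho>" y \<gamma> e]
      by (cases "z = y") auto
  qed
qed

lemma Cmg_iterD_oscillation:
  fixes F :: "real^'n::finite \<Rightarrow> real"
  assumes "0 \<le> \<gamma>" and Cmg: "Cmg m \<gamma> F" and K: "compact K"
    and hol: "\<gamma> > 0 \<Longrightarrow> ((\<lambda>\<epsilon>. holder_grad_seminorm m \<gamma> F (nbhd K \<epsilon>)) \<longlongrightarrow> 0) (at_right 0)"
    and e: "e > 0"
  shows "\<forall>\<^sub>F \<rho> in at_right 0. \<forall>ds\<in>{ds. length ds = m}. \<forall>y\<in>K. \<forall>z.
           dist z y < \<rho> \<longrightarrow> \<bar>iterD ds F z - iterD ds F y\<bar> \<le> e * dist z y powr \<gamma>"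
proof (cases "\<gamma> = 0")
  case True
  have Cm: "Cm m F" using Cmg by (simp add: Cmg_def)
  show ?thesis
    using Cm_iterD_uniform_oscillation[OF Cm K e] by eventually_elim (auto simp: True)
next
  case False
  with assms show ?thesis
    by (intro holder_grad_seminorm_iterD_oscillation) (auto simp: Cmg_def)
qed

lemma flat_on_compact_little_o:
  fixes F :: "real^'n::finite \<Rightarrow> real"
  assumes Cm: "Cm m F" and m: "m \<ge> 1" and \<gamma>: "0 \<le> \<gamma>"
    and flat: "\<And>y ds. y \<in> K \<Longrightarrow> 1 \<le> length ds \<Longrightarrow> length ds \<le> m \<Longrightarrow> iterD ds F y = 0"
    and osc: "\<And>e. e > 0 \<Longrightarrow> \<forall>\<^sub>F \<rho> in at_right 0. \<forall>ds\<in>{ds. length ds = m}. \<forall>y\<in>K. \<forall>z.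
           dist z y < \<rho> \<longrightarrow> \<bar>iterD ds F z - iterD ds F y\<bar> \<le> e * dist z y powr \<gamma>"
    and e: "e > 0"
  shows "\<forall>\<^sub>F \<rho> in at_right 0. \<forall>x\<in>K. \<forall>y\<in>K. dist x y < \<rho> \<longrightarrow>
           \<bar>F x - F y\<bar> \<le> e * dist x y powr (real m + \<gamma>)"
proof -
  define N where "N = real CARD('n) ^ m"
  have N: "N > 0" by (simp add: N_def)
  have "e / N > 0" using e N by simp
  from osc[OF this] show ?thesis
  proof (rule eventually_mono, intro ballI impI)
    fix \<rho> x y
    assume osc\<rho>: "\<forall>ds\<in>{ds. length ds = m}. \<forall>y\<in>K. \<forall>z. dist z y < \<rho> \<longrightarrow>
                    \<bar>iterD ds F z - iterD ds F y\<bar> \<le> e / N * dist z y powr \<gamma>"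
      and xy: "x \<in> K" "y \<in> K" "dist x y < \<rho>"
    have "\<bar>F x - F y\<bar> \<le> real CARD('n) ^ m * norm (x - y) ^ m * (e / N * dist x y powr \<gamma>)"
    proof (rule taylor_bound_at_flat_point[OF Cm m])
      fix z and ds :: "'n list"
      assume "norm (z - y) \<le> norm (x - y)" and "length ds = m"
      then have "dist z y \<le> dist x y" "dist z y < \<rho>" and
        "\<bar>iterD ds F z - iterD ds F y\<bar> \<le> e / N * dist z y powr \<gamma>"
        using xy osc\<rho> by (auto simp: dist_norm)
      moreover have "dist z y powr \<gamma> \<le> dist x y powr \<gamma>"
        using \<open>dist z y \<le> dist x y\<close> \<gamma> by (intro powr_mono2) auto
      ultimately show "\<bar>iterD ds F z - iterD ds F y\<bar> \<le> e / N * dist x y powr \<gamma>"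
        using e N by (smt (verit) divide_pos_pos mult_left_mono)
    qed (use flat xy in auto)
    also have "\<dots> = e * (dist x y ^ m * dist x y powr \<gamma>)"
      using N by (simp add: N_def dist_norm)
    also have "dist x y ^ m * dist x y powr \<gamma> = dist x y powr (real m + \<gamma>)"
      by (cases "x = y") (simp_all add: powr_add powr_realpow)
    finally show "\<bar>F x - F y\<bar> \<le> e * dist x y powr (real m + \<gamma>)" .
  qed
qed

lemma Cmg_flat_little_o:
  fixes F :: "real^'n::finite \<Rightarrow> real"
  assumes m: "m \<ge> 1" and \<gamma>: "0 \<le> \<gamma>" and Cmg: "Cmg m \<gamma> F" and K: "compact K"
    and flat: "\<And>j x. x \<in> K \<Longrightarrow> 1 \<le> mabs j \<Longrightarrow> mabs j \<le> m \<Longrightarrow> mderiv j F x = 0"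
    and hol: "\<gamma> > 0 \<Longrightarrow> ((\<lambda>\<epsilon>. holder_grad_seminorm m \<gamma> F (nbhd K \<epsilon>)) \<longlongrightarrow> 0) (at_right 0)"
    and e: "e > 0"
  shows "\<forall>\<^sub>F \<rho> in at_right 0. \<forall>x\<in>K. \<forall>y\<in>K. dist x y < \<rho> \<longrightarrow>
           \<bar>F x - F y\<bar> \<le> e * dist x y powr (real m + \<gamma>)"
proof -
  have Cm: "Cm m F" using Cmg by (simp add: Cmg_def)
  have "iterD ds F y = 0" if "y \<in> K" "1 \<le> length ds" "length ds \<le> m" for y ds
    using flat[of y "\<lambda>i. count (mset ds) i"] Cm_mderiv_count_mset[OF Cm that(3)]
      mabs_count_mset[of ds] that
    by simp
  from flat_on_compact_little_o[OF Cm m \<gamma> this Cmg_iterD_oscillation[OF \<gamma> Cmg K hol] e]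
  show ?thesis .
qed

lemma eventually_at_right_0_ex:
  "\<forall>\<^sub>F \<rho> in at_right (0::real). P \<rho> \<Longrightarrow> \<exists>\<rho>>0. P \<rho>"
  using eventually_happens'[OF trivial_limit_at_right_real eventually_conj[OF eventually_at_right_less]]
  by blast

lemma bdd_above_holder_ratios:
  fixes g :: "'a::metric_space \<Rightarrow> real"
  assumes p: "p > 0" and bdd: "bounded (g ` K)" and \<rho>: "\<rho> > 0"
    and near: "\<And>x y. x \<in> K \<Longrightarrow> y \<in> K \<Longrightarrow> dist x y < \<rho> \<Longrightarrow> \<bar>g x - g y\<bar> \<le> c * dist x y powr p"
  shows "bdd_above {\<bar>g x - g y\<bar> / dist x y powr p | x y. x \<in> K \<and> y \<in> K \<and> x \<noteq> y}"
proof -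
  obtain M where M: "\<And>x. x \<in> K \<Longrightarrow> \<bar>g x\<bar> \<le> M"
    using bdd unfolding bounded_iff by auto
  have "\<bar>g x - g y\<bar> / dist x y powr p \<le> max c (2 * M / \<rho> powr p)"
    if xy: "x \<in> K" "y \<in> K" "x \<noteq> y" for x y
  proof (cases "dist x y < \<rho>")
    case True
    then have "\<bar>g x - g y\<bar> / dist x y powr p \<le> c"
      using near[OF xy(1,2)] xy(3) by (simp add: divide_le_eq)
    then show ?thesis by simp
  next
    case False
    then have "\<rho> powr p \<le> dist x y powr p" using \<rho> p by (intro powr_mono2) auto
    moreover have "\<bar>g x - g y\<bar> \<le> 2 * M" using M[OF xy(1)] M[OF xy(2)] by linarith
    ultimately have "\<bar>g x - g y\<bar> / dist x y powr p \<le> 2 * M / \<rho> powr p"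
      using \<rho> by (intro frac_le) auto
    then show ?thesis by simp
  qed
  then show ?thesis by (intro bdd_aboveI) blast
qed

lemma uniform_little_o_modulus:
  fixes g :: "'a::metric_space \<Rightarrow> real"
  assumes p: "p > 0" and bdd: "bounded (g ` K)"
    and lo: "\<And>e. e > 0 \<Longrightarrow> \<forall>\<^sub>F \<rho> in at_right 0. \<forall>x\<in>K. \<forall>y\<in>K. dist x y < \<rho> \<longrightarrow>
               \<bar>g x - g y\<bar> \<le> e * dist x y powr p"
  obtains \<omega> where "\<And>r. 0 \<le> \<omega> r" "(\<omega> \<longlongrightarrow> 0) (at_right 0)"
    "\<And>x y r. x \<in> K \<Longrightarrow> y \<in> K \<Longrightarrow> dist x y \<le> r \<Longrightarrow> \<bar>g x - g y\<bar> \<le> \<omega> r * dist x y powr p"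
proof -
  define S where "S r = {\<bar>g x - g y\<bar> / dist x y powr p | x y. x \<in> K \<and> y \<in> K \<and> x \<noteq> y \<and> dist x y \<le> r}" for r
  define \<omega> where "\<omega> r = Sup (insert 0 (S r))" for r
  obtain \<rho>1 where \<rho>1: "\<rho>1 > 0"
    and near: "\<forall>x\<in>K. \<forall>y\<in>K. dist x y < \<rho>1 \<longrightarrow> \<bar>g x - g y\<bar> \<le> 1 * dist x y powr p"
    using eventually_at_right_0_ex[OF lo[of 1]] by auto
  have "bdd_above {\<bar>g x - g y\<bar> / dist x y powr p | x y. x \<in> K \<and> y \<in> K \<and> x \<noteq> y}"
    using near by (intro bdd_above_holder_ratios[OF p bdd \<rho>1, of 1]) auto
  moreover have "S r \<subseteq> {\<bar>g x - g y\<bar> / dist x y powr p | x y. x \<in> K \<and> y \<in> K \<and> x \<noteq> y}" for r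
    unfolding S_def by blast
  ultimately have bdd_S: "bdd_above (insert 0 (S r))" for r
    unfolding bdd_above_insert by (rule bdd_above_mono)
  have \<omega>_nonneg: "0 \<le> \<omega> r" for r
    unfolding \<omega>_def by (rule cSup_upper[OF insertI1 bdd_S])
  have \<omega>_le: "\<omega> r \<le> e" if "e > 0" "\<And>x y. x \<in> K \<Longrightarrow> y \<in> K \<Longrightarrow> dist x y \<le> r \<Longrightarrow>
      \<bar>g x - g y\<bar> \<le> e * dist x y powr p" for e r
    unfolding \<omega>_def S_def using that by (intro cSup_least) (auto simp: divide_le_eq)
  have "(\<omega> \<longlongrightarrow> 0) (at_right 0)"
  proof (rule tendstoI)
    fix e :: real assume "e > 0"
    then obtain \<rho> where "\<rho> > 0"
      and small: "\<forall>x\<in>K. \<forall>y\<in>K. dist x y < \<rho> \<longrightarrow> \<bar>g x - g y\<bar> \<le> e / 2 * dist x y powr p"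
      using eventually_at_right_0_ex[OF lo[of "e / 2"]] by auto
    show "\<forall>\<^sub>F r in at_right 0. dist (\<omega> r) 0 < e"
      unfolding eventually_at_right_field
    proof (intro exI[of _ \<rho>] conjI allI impI)
      fix r assume "0 < r" "r < \<rho>"
      then have "\<omega> r \<le> e / 2" using small \<open>e > 0\<close> by (intro \<omega>_le) auto
      then show "dist (\<omega> r) 0 < e" using \<omega>_nonneg[of r] \<open>e > 0\<close> by simp
    qed fact
  qed
  moreover have "\<bar>g x - g y\<bar> \<le> \<omega> r * dist x y powr p" if "x \<in> K" "y \<in> K" "dist x y \<le> r" for x y r
  proof (cases "x = y")
    case False
    then have "\<bar>g x - g y\<bar> / dist x y powr p \<le> \<omega> r"
      unfolding \<omega>_def using that by (intro cSup_upper[OF _ bdd_S]) (auto simp: S_def)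
    then show ?thesis using False by (simp add: divide_le_eq)
  qed simp
  ultimately show thesis using that \<omega>_nonneg by blast
qed

section \<open>The compressed jet\<close>

lemma compressed_ratio_le:
  fixes u d \<epsilon> p c :: real
  assumes d: "0 < d" and \<epsilon>: "0 < \<epsilon>" and p: "0 < p" and c: "0 \<le> c" and u: "u \<le> \<epsilon>"
    and near: "d \<le> \<epsilon> powr (1 / (2 * p)) \<Longrightarrow> u \<le> c * d powr p"
  shows "u / d powr p \<le> sqrt \<epsilon> + c"
proof (cases "d \<le> \<epsilon> powr (1 / (2 * p))")
  case True
  then have "u / d powr p \<le> c" using near d by (simp add: divide_le_eq)
  moreover have "0 \<le> sqrt \<epsilon>" using \<epsilon> by simp
  ultimately show ?thesis by linarith
next
  case False
  have "sqrt \<epsilon> = (\<epsilon> powr (1 / (2 * p))) powr p"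
    using \<epsilon> p by (simp add: powr_powr powr_half_sqrt[symmetric])
  also have "\<dots> \<le> d powr p" using False \<epsilon> p by (intro powr_mono2) auto
  finally have "u / d powr p \<le> \<epsilon> / sqrt \<epsilon>"
    using u \<epsilon> d by (intro frac_le) auto
  also have "\<epsilon> / sqrt \<epsilon> = sqrt \<epsilon>" using \<epsilon> by (simp add: real_div_sqrt)
  finally show ?thesis using c by simp
qed

lemma finite_mabs_le: "finite {l :: ('n::finite) mindex. mabs l \<le> m}"
proof (rule finite_subset)
  show "{l :: 'n mindex. mabs l \<le> m} \<subseteq> Pi\<^sub>E UNIV (\<lambda>_. {..m})"
  proof
    fix l :: "'n mindex" assume "l \<in> {l. mabs l \<le> m}"
    then have "l i \<le> m" for i
      using member_le_sum[of i UNIV l] by (simp add: mabs_def)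
    then show "l \<in> Pi\<^sub>E UNIV (\<lambda>_. {..m})" by (simp add: PiE_UNIV_domain)
  qed
qed (intro finite_PiE; simp)

lemma jet_rem_scalar:
  fixes j :: "('n::finite) mindex"
  shows "jet_rem m (\<lambda>j x. if j = (\<lambda>_. 0) then g x else 0) j x y
     = (if j = (\<lambda>_. 0) then g x - g y else 0)"
proof (cases "j = (\<lambda>_. 0)")
  case True
  have "(\<Sum>l\<in>{l. mabs (\<lambda>i. j i + l i) \<le> m}.
          (1 / mfact l) * (if (\<lambda>i. j i + l i) = (\<lambda>_. 0) then g y else 0) * mpow (x - y) l)
      = (\<Sum>l\<in>{l::'n mindex. mabs l \<le> m}. if l = (\<lambda>_. 0) then g y else 0)"
    by (intro sum.cong) (auto simp: True mfact_def mpow_def)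
  also have "\<dots> = g y" using finite_mabs_le[where 'n='n, of m] by (simp add: mabs_def)
  finally show ?thesis using True by (simp add: jet_rem_def)
next
  case False
  then have "(\<lambda>i. j i + l i) \<noteq> (\<lambda>_. 0)" for l
    by (auto simp: fun_eq_iff)
  with False show ?thesis by (simp add: jet_rem_def)
qed

lemma jet_norm_scalar_le:
  fixes K :: "(real^'n::finite) set"
  assumes c: "0 \<le> c" and sup: "\<And>x. x \<in> K \<Longrightarrow> \<bar>g x\<bar> \<le> c"
    and ratio: "\<And>x y. x \<in> K \<Longrightarrow> y \<in> K \<Longrightarrow> x \<noteq> y \<Longrightarrow> \<bar>g x - g y\<bar> / dist x y powr (real m + \<gamma>) \<le> c"
  shows "jet_norm m \<gamma> K (\<lambda>j x. if j = (\<lambda>_. 0) then g x else 0) \<le> ereal c"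
  unfolding jet_norm_def
proof (rule Sup_least, elim UnE CollectE exE conjE)
  fix a and j :: "'n mindex" and x assume "a = ereal \<bar>(if j = (\<lambda>_. 0) then g x else 0)\<bar>" "x \<in> K"
  then show "a \<le> ereal c" using sup c by auto
next
  fix a and j :: "'n mindex" and x y
  assume a: "a = ereal (\<bar>jet_rem m (\<lambda>j x. if j = (\<lambda>_. 0) then g x else 0) j x y\<bar>
                         / dist x y powr (real m + \<gamma> - real (mabs j)))"
    and "x \<in> K" "y \<in> K" "x \<noteq> y"
  then show "a \<le> ereal c"
    using ratio c by (auto simp: jet_rem_scalar mabs_def)
qed

lemma jet_norm_compression_le:
  fixes F :: "real^'n::finite \<Rightarrow> real"
  assumes p: "real m + \<gamma> > 0" and \<epsilon>: "\<epsilon> > 0" and \<eta>: "compression_map \<epsilon> \<eta>" and c: "0 \<le> c"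
    and near: "\<And>x y. x \<in> K \<Longrightarrow> y \<in> K \<Longrightarrow> dist x y \<le> \<epsilon> powr (1 / (2 * (real m + \<gamma>))) \<Longrightarrow>
                 \<bar>F x - F y\<bar> \<le> c * dist x y powr (real m + \<gamma>)"
  shows "jet_norm m \<gamma> K (\<lambda>j x. if j = (\<lambda>_. 0) then \<eta> (F x) else 0) \<le> ereal (\<epsilon> + sqrt \<epsilon> + c)"
proof (rule jet_norm_scalar_le)
  have "0 \<le> sqrt \<epsilon>" using \<epsilon> by simp
  then show "0 \<le> \<epsilon> + sqrt \<epsilon> + c" "\<bar>\<eta> (F x)\<bar> \<le> \<epsilon> + sqrt \<epsilon> + c" for x
    using compression_map_abs_le[OF \<eta>, of "F x"] \<epsilon> c by linarith+
  fix x y assume xy: "x \<in> K" "y \<in> K" "x \<noteq> y"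
  have "\<bar>\<eta> (F x) - \<eta> (F y)\<bar> / dist x y powr (real m + \<gamma>) \<le> sqrt \<epsilon> + c"
  proof (rule compressed_ratio_le[OF _ \<epsilon> p c compression_map_oscillation[OF \<eta>]])
    show "0 < dist x y" using xy by simp
  qed (use order_trans[OF compression_map_lipschitz[OF \<eta>] near[OF xy(1,2)]] in simp)
  then show "\<bar>\<eta> (F x) - \<eta> (F y)\<bar> / dist x y powr (real m + \<gamma>) \<le> \<epsilon> + sqrt \<epsilon> + c"
    using \<epsilon> by simp
qed

lemma tendsto_compression_bound:
  fixes \<omega> :: "real \<Rightarrow> real"
  assumes \<omega>: "(\<omega> \<longlongrightarrow> 0) (at_right 0)" and p: "p > 0"
  shows "((\<lambda>\<epsilon>. \<epsilon> + sqrt \<epsilon> + \<omega> (\<epsilon> powr (1 / (2 * p)))) \<longlongrightarrow> 0) (at_right 0)"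
proof -
  have "filterlim (\<lambda>\<epsilon>. \<epsilon> powr (1 / (2 * p))) (at_right 0) (at_right 0)"
    unfolding filterlim_at using p
    by (auto intro!: tendsto_zero_powrI eventually_mono[OF eventually_at_right_less])
  then have "((\<lambda>\<epsilon>. \<omega> (\<epsilon> powr (1 / (2 * p)))) \<longlongrightarrow> 0) (at_right 0)"
    by (rule filterlim_compose[OF \<omega>])
  moreover have "((\<lambda>\<epsilon>::real. sqrt \<epsilon>) \<longlongrightarrow> 0) (at_right 0)"
    using tendsto_real_sqrt[OF tendsto_ident_at, of 0] by simp
  ultimately show ?thesis
    using tendsto_add[OF tendsto_add[OF tendsto_ident_at]] by fastforce
qed

theorem mainTheorem13:
  fixes F :: "real^'n::finite \<Rightarrow> real" and K :: "(real^'n) set"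
    and m :: nat and \<gamma> :: real
  assumes "m \<ge> 1" and "0 \<le> \<gamma>" and "\<gamma> \<le> 1"
    and "Cmg m \<gamma> F"
    and "compact K"
    and "\<And>j x. x \<in> K \<Longrightarrow> 1 \<le> mabs j \<Longrightarrow> mabs j \<le> m \<Longrightarrow> mderiv j F x = 0"
    and "\<gamma> > 0 \<Longrightarrow> ((\<lambda>\<epsilon>. holder_grad_seminorm m \<gamma> F (nbhd K \<epsilon>)) \<longlongrightarrow> 0) (at_right 0)"
  shows "\<exists>\<delta> :: real \<Rightarrow> real. (\<forall>\<epsilon>>0. 0 \<le> \<delta> \<epsilon>) \<and> (\<delta> \<longlongrightarrow> 0) (at_right 0) \<and>
           (\<forall>\<epsilon>>0. \<forall>\<eta>. compression_map \<epsilon> \<eta> \<longrightarrow>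
              jet_norm m \<gamma> K (\<lambda>j x. if j = (\<lambda>_. 0) then \<eta> (F x) else 0) \<le> ereal (\<delta> \<epsilon>))"
proof -
  define p where "p = real m + \<gamma>"
  have p: "p > 0" using assms(1,2) by (simp add: p_def)
  have "bounded (F ` K)"
    using Cm_continuous_on_iterD[of m F "[]"] assms(4,5) unfolding Cmg_def
    by (intro compact_imp_bounded compact_continuous_image) (auto intro: continuous_on_subset)
  moreover have "\<forall>\<^sub>F \<rho> in at_right 0. \<forall>x\<in>K. \<forall>y\<in>K. dist x y < \<rho> \<longrightarrow>
      \<bar>F x - F y\<bar> \<le> e * dist x y powr p" if "e > 0" for e
    using Cmg_flat_little_o[OF assms(1,2,4-7) that] unfolding p_def .
  ultimately obtain \<omega> where \<omega>: "\<And>r. 0 \<le> \<omega> r" "(\<omega> \<longlongrightarrow> 0) (at_right 0)"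
    "\<And>x y r. x \<in> K \<Longrightarrow> y \<in> K \<Longrightarrow> dist x y \<le> r \<Longrightarrow> \<bar>F x - F y\<bar> \<le> \<omega> r * dist x y powr p"
    using uniform_little_o_modulus[OF p] by blast
  define \<delta> where "\<delta> \<epsilon> = \<epsilon> + sqrt \<epsilon> + \<omega> (\<epsilon> powr (1 / (2 * p)))" for \<epsilon>
  have "\<forall>\<epsilon>>0. 0 \<le> \<delta> \<epsilon>" using \<omega>(1) by (simp add: \<delta>_def)
  moreover have "(\<delta> \<longlongrightarrow> 0) (at_right 0)"
    unfolding \<delta>_def using tendsto_compression_bound[OF \<omega>(2) p] .
  moreover have "jet_norm m \<gamma> K (\<lambda>j x. if j = (\<lambda>_. 0) then \<eta> (F x) else 0) \<le> ereal (\<delta> \<epsilon>)"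
    if "\<epsilon> > 0" "compression_map \<epsilon> \<eta>" for \<epsilon> \<eta>
    unfolding \<delta>_def using p that \<omega>(1,3) unfolding p_def by (intro jet_norm_compression_le)
  ultimately show ?thesis by blast
qed

end
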